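(* Let $n\ge 2$ and let $t\in\{1,\dots,n-1\}$. A code $\mathcal{C}\subseteq\{0,1\}^{n\times n}$ is a $(t,t)$-criss-cross deletion correcting code if and only if it is a $(t,t)$-criss-cross insertion correcting code.
   Context: For a binary array $\mathbf{X}$, $\mathbb{D}_{t_r,t_c}(\mathbf{X})$ denotes the set of all arrays obtained from $\mathbf{X}$ by deleting any $t_r$ rows and any $t_c$ columns, and $\mathbb{I}_{t_r,t_c}(\mathbf{X})$ the set of all binary arrays obtained by inserting $t_r$ rows and $t_c$ columns (arbitrary binary content, arbitrary positions). A code $\mathcal{C}\subseteq\{0,1\}^{n\times n}$ is a $(t_r,t_c)$-criss-cross deletion correcting code if $\mathbb{D}_{t_r,t_c}(\mathbf{X})\cap\mathbb{D}_{t_r,t_c}(\mathbf{Y})=\emptyset$ for all distinct $\mathbf{X},\mathbf{Y}\in\mathcal{C}$; a $(t_r,t_c)$-criss-cross insertion correcting code is defined analogously with $\mathbb{I}_{t_r,t_c}$. *)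

theory Defs
  imports Main
begin

definition is_array :: "nat \<Rightarrow> nat \<Rightarrow> bool list list \<Rightarrow> bool" where
  "is_array m k X \<longleftrightarrow> length X = m \<and> (\<forall>r\<in>set X. length r = k)"

definition ncols :: "bool list list \<Rightarrow> nat" where
  "ncols X = (if X = [] then 0 else length (hd X))"

definition del_rc :: "nat set \<Rightarrow> nat set \<Rightarrow> bool list list \<Rightarrow> bool list list" where
  "del_rc R C X = map (\<lambda>r. nths r (- C)) (nths X (- R))"

definition del_ball :: "nat \<Rightarrow> nat \<Rightarrow> bool list list \<Rightarrow> bool list list set" where
  "del_ball tr tc X = {del_rc R C X | R C.
      R \<subseteq> {..<length X} \<and> card R = tr \<and> C \<subseteq> {..<ncols X} \<and> card C = tc}"

definition ins_ball :: "nat \<Rightarrow> nat \<Rightarrow> bool list list \<Rightarrow> bool list list set" where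
  "ins_ball tr tc X = {Y. \<exists>R C. is_array (length X + tr) (ncols X + tc) Y \<and>
      R \<subseteq> {..<length X + tr} \<and> card R = tr \<and>
      C \<subseteq> {..<ncols X + tc} \<and> card C = tc \<and> del_rc R C Y = X}"

definition del_code :: "nat \<Rightarrow> nat \<Rightarrow> bool list list set \<Rightarrow> bool" where
  "del_code tr tc Cd \<longleftrightarrow>
     (\<forall>X\<in>Cd. \<forall>Y\<in>Cd. X \<noteq> Y \<longrightarrow> del_ball tr tc X \<inter> del_ball tr tc Y = {})"

definition ins_code :: "nat \<Rightarrow> nat \<Rightarrow> bool list list set \<Rightarrow> bool" where
  "ins_code tr tc Cd \<longleftrightarrow>
     (\<forall>X\<in>Cd. \<forall>Y\<in>Cd. X \<noteq> Y \<longrightarrow> ins_ball tr tc X \<inter> ins_ball tr tc Y = {})"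

end

theory Submission
  imports Defs
begin

text \<open>Both directions work with the sets of kept row and column indices.

If Z arises from X and from Y by inserting t rows and t columns, the rows of Z kept for X and
for Y are two n-subsets of the n + t row indices, so they share at least n - t indices; likewise
for columns. Restricting Z to n - t shared rows and columns is an array obtained from both X and
Y by deleting t rows and t columns.

Conversely, if W arises from X and from Y by deletions, pairing the i-th surviving row of X with
the i-th surviving row of Y is an order preserving matching of size n - t. Merging the row
indices of X and Y along it, as in a shortest common supersequence, uses n + t positions, and
the same holds for columns. Writing X and Y into these positions is consistent, because matched
entries of X and Y are both the corresponding entry of W.\<close>

definition grid :: "nat list \<Rightarrow> nat list \<Rightarrow> (nat \<Rightarrow> nat \<Rightarrow> 'a) \<Rightarrow> 'a list list" where
  "grid rs cs F = map (\<lambda>i. map (F i) cs) rs"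

lemma is_array_grid: "is_array (length rs) (length cs) (grid rs cs F)"
  unfolding is_array_def grid_def by auto

lemma grid_entries: "is_array m k X \<Longrightarrow> grid [0..<m] [0..<k] (\<lambda>i j. X ! i ! j) = X"
  unfolding is_array_def grid_def by (auto intro!: nth_equalityI)

lemma grid_cong:
  "(\<And>i j. i \<in> set rs \<Longrightarrow> j \<in> set cs \<Longrightarrow> F i j = G i j) \<Longrightarrow> grid rs cs F = grid rs cs G"
  unfolding grid_def by auto

lemma grid_map: "grid (map p rs) (map q cs) F = grid rs cs (\<lambda>i j. F (p i) (q j))"
  unfolding grid_def by simp

lemma nth_grid_eq:
  assumes "grid rs cs F = grid rs' cs' G" "i < length rs" "j < length cs"
  shows "F (rs ! i) (cs ! j) = G (rs' ! i) (cs' ! j)"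
proof -
  have "length rs' = length rs" "length cs' = length cs"
    using arg_cong[OF assms(1), of length] arg_cong[OF assms(1), of "\<lambda>X. length (X ! i)"] assms(2)
    by (simp_all add: grid_def)
  then show ?thesis
    using arg_cong[OF assms(1), of "\<lambda>X. X ! i ! j"] assms(2,3) by (simp add: grid_def)
qed

lemma del_rc_grid: "del_rc R C (grid rs cs F) = grid (nths rs (- R)) (nths cs (- C)) F"
  unfolding del_rc_def grid_def by (simp add: nths_map)

lemma ncols_array: "is_array m k X \<Longrightarrow> 0 < m \<Longrightarrow> ncols X = k"
  unfolding is_array_def ncols_def by (cases X) auto

lemma nths_eq_filter: "(\<And>i. i < length xs \<Longrightarrow> i \<in> A \<longleftrightarrow> P (xs ! i)) \<Longrightarrow> nths xs A = filter P xs"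
proof (induction xs arbitrary: A)
  case (Cons x xs)
  have "nths xs {j. Suc j \<in> A} = filter P xs"
    using Cons.prems by (intro Cons.IH) auto
  moreover have "0 \<in> A \<longleftrightarrow> P x" using Cons.prems by force
  ultimately show ?case by (simp add: nths_Cons)
qed simp

lemma filter_sorted_list_of_set:
  "finite A \<Longrightarrow> filter P (sorted_list_of_set A) = sorted_list_of_set {x \<in> A. P x}"
  by (rule sorted_distinct_set_unique) (auto intro: sorted_wrt_filter)

lemma strict_sorted_nth_less_iff:
  fixes xs :: "'a::linorder list"
  assumes "sorted_wrt (<) xs" "i < length xs" "j < length xs"
  shows "xs ! i < xs ! j \<longleftrightarrow> i < j"
  using sorted_wrt_nth_less[OF assms(1), of i j] sorted_wrt_nth_less[OF assms(1), of j i] assms(2,3)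
  by (cases i j rule: linorder_cases) auto

lemma sorted_list_of_set_image_strict_mono:
  assumes "strict_mono_on {..<n} p"
  shows "sorted_list_of_set (p ` {..<n}) = map p [0..<n]"
proof (rule sorted_distinct_set_unique)
  show "sorted (map p [0..<n])"
    using assms by (auto simp: sorted_iff_nth_mono strict_mono_on_def order_le_less)
  show "distinct (map p [0..<n])"
    using strict_mono_on_imp_inj_on[OF assms] by (simp add: distinct_map lessThan_atLeast0)
qed auto

lemma del_rc_array:
  assumes "is_array m k X"
  shows "del_rc R C X = grid (sorted_list_of_set ({..<m} - R)) (sorted_list_of_set ({..<k} - C)) (\<lambda>i j. X ! i ! j)"
proof -
  have upt: "nths [0..<N] (- S) = sorted_list_of_set ({..<N} - S)" for N S
  proof -
    have "nths [0..<N] (- S) = filter (\<lambda>i. i \<notin> S) (sorted_list_of_set {..<N})"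
      by (subst nths_eq_filter) (auto simp: lessThan_atLeast0)
    then show ?thesis by (simp add: filter_sorted_list_of_set set_diff_eq)
  qed
  show ?thesis
    by (metis assms grid_entries del_rc_grid upt)
qed

lemma subgrid_in_del_ball:
  assumes A: "finite A" "A \<noteq> {}" and B: "finite B"
    and K: "K \<subseteq> A" "card K + tr = card A" and L: "L \<subseteq> B" "card L + tc = card B"
  shows "grid (sorted_list_of_set K) (sorted_list_of_set L) F
           \<in> del_ball tr tc (grid (sorted_list_of_set A) (sorted_list_of_set B) F)"
proof -
  define pos where "pos S T = {i. i < card S \<and> sorted_list_of_set S ! i \<notin> T}" for S T :: "nat set"
  have kept: "nths (sorted_list_of_set S) (- pos S T) = sorted_list_of_set T"
    if "finite S" "T \<subseteq> S" for S T
  proof -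
    have "nths (sorted_list_of_set S) (- pos S T) = filter (\<lambda>x. x \<in> T) (sorted_list_of_set S)"
      using that(1) by (intro nths_eq_filter) (auto simp: pos_def)
    then show ?thesis
      using that by (simp add: filter_sorted_list_of_set Int_absorb1 flip: Int_def)
  qed
  have card_pos: "card (pos S T) = card S - card T" if "finite S" "T \<subseteq> S" for S T
  proof -
    have "card (pos S T) = length (filter (\<lambda>x. x \<notin> T) (sorted_list_of_set S))"
      by (simp add: pos_def length_filter_conv_card)
    also have "\<dots> = card (S - T)"
      using that(1) by (simp add: filter_sorted_list_of_set set_diff_eq)
    finally show ?thesis
      using that by (simp add: card_Diff_subset finite_subset)
  qed
  have dims: "length (grid (sorted_list_of_set A) (sorted_list_of_set B) F) = card A"
    "ncols (grid (sorted_list_of_set A) (sorted_list_of_set B) F) = card B"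
    using ncols_array[OF is_array_grid] A by (auto simp: grid_def)
  show ?thesis
    unfolding del_ball_def dims
  proof (intro CollectI exI conjI)
    show "grid (sorted_list_of_set K) (sorted_list_of_set L) F =
      del_rc (pos A K) (pos B L) (grid (sorted_list_of_set A) (sorted_list_of_set B) F)"
      by (simp add: del_rc_grid kept A B K L)
  qed (use card_pos A B K L in \<open>auto simp: pos_def\<close>)
qed

lemma embedding_in_ins_ball:
  assumes X: "is_array m k X" "0 < m" and Z: "is_array (m + tr) (k + tc) Z"
    and p: "strict_mono_on {..<m} p" "p ` {..<m} \<subseteq> {..<m + tr}"
    and q: "strict_mono_on {..<k} q" "q ` {..<k} \<subseteq> {..<k + tc}"
    and entries: "\<And>i j. i < m \<Longrightarrow> j < k \<Longrightarrow> Z ! p i ! q j = X ! i ! j"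
  shows "Z \<in> ins_ball tr tc X"
proof -
  have dims: "length X = m" "ncols X = k"
    using X ncols_array by (auto simp: is_array_def)
  have card_images: "card (p ` {..<m}) = m" "card (q ` {..<k}) = k"
    using p(1) q(1) by (simp_all add: card_image strict_mono_on_imp_inj_on)
  have "del_rc ({..<m + tr} - p ` {..<m}) ({..<k + tc} - q ` {..<k}) Z
      = grid (map p [0..<m]) (map q [0..<k]) (\<lambda>i j. Z ! i ! j)"
    using p q by (simp add: del_rc_array[OF Z] double_diff sorted_list_of_set_image_strict_mono)
  also have "\<dots> = grid [0..<m] [0..<k] (\<lambda>i j. X ! i ! j)"
    unfolding grid_map using entries by (intro grid_cong) auto
  also have "\<dots> = X"
    by (rule grid_entries[OF X(1)])
  finally show ?thesis
    unfolding ins_ball_def dims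
    using Z p(2) q(2) card_images by (intro CollectI exI conjI) (auto simp: card_Diff_subset)
qed

definition order_matching :: "(nat \<times> nat) set \<Rightarrow> bool" where
  "order_matching M \<longleftrightarrow> (\<forall>(r, s) \<in> M. \<forall>(r', s') \<in> M. r < r' \<longleftrightarrow> s < s')"

lemma order_matching_eq_iff:
  "order_matching M \<Longrightarrow> (r, s) \<in> M \<Longrightarrow> (r', s') \<in> M \<Longrightarrow> r = r' \<longleftrightarrow> s = s'"
proof -
  assume "order_matching M" "(r, s) \<in> M" "(r', s') \<in> M"
  then have "r < r' \<longleftrightarrow> s < s'" "r' < r \<longleftrightarrow> s' < s"
    unfolding order_matching_def by fast+
  then show ?thesis by (cases r r' rule: linorder_cases) auto
qed

lemma card_order_matching_le:
  assumes "order_matching M" "M \<subseteq> {..<n} \<times> B"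
  shows "card M \<le> n"
proof -
  have "inj_on fst M"
    using order_matching_eq_iff[OF assms(1)] by (auto simp: inj_on_def)
  then have "card M = card (fst ` M)" by (simp add: card_image)
  also have "\<dots> \<le> card {..<n}"
    using assms(2) by (intro card_mono) auto
  finally show ?thesis by simp
qed

lemma order_matching_zip:
  fixes xs ys :: "nat list"
  assumes "sorted_wrt (<) xs" "sorted_wrt (<) ys" "length xs = length ys"
  shows "order_matching (set (zip xs ys))"
proof -
  have "xs ! i < xs ! j \<longleftrightarrow> ys ! i < ys ! j" if "i < length xs" "j < length xs" for i j
    using strict_sorted_nth_less_iff[OF assms(1)] strict_sorted_nth_less_iff[OF assms(2)] that assms(3)
    by simp
  then show ?thesis
    unfolding order_matching_def using assms(3) by (auto simp: set_zip)
qed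

lemma order_matching_subset: "order_matching M \<Longrightarrow> M' \<subseteq> M \<Longrightarrow> order_matching M'"
  unfolding order_matching_def by blast

lemma order_matching_remove_last:
  assumes "order_matching M" "M \<subseteq> {..<Suc x} \<times> {..<Suc y}" "(x, y) \<in> M"
  shows "M - {(x, y)} \<subseteq> {..<x} \<times> {..<y}"
  using assms order_matching_eq_iff[OF assms(1) _ assms(3)] by (fastforce simp: less_Suc_eq)

lemma order_matching_last_cases:
  assumes "order_matching M" "M \<subseteq> {..<Suc x} \<times> {..<Suc y}"
  obtains "(x, y) \<in> M" | "\<forall>s. (x, s) \<notin> M" | "\<forall>r. (r, y) \<notin> M"
proof (cases "(\<exists>s. (x, s) \<in> M) \<and> (\<exists>r. (r, y) \<in> M)")
  case True
  then obtain r s where rs: "(x, s) \<in> M" "(r, y) \<in> M" by blast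
  with assms(2) have "r \<le> x" "s \<le> y" by auto
  moreover have "r < x \<longleftrightarrow> y < s"
    using assms(1) rs unfolding order_matching_def by fast
  ultimately have "r = x" by linarith
  then have "s = y"
    using order_matching_eq_iff[OF assms(1) rs] by simp
  then show ?thesis using rs that by blast
qed (use that in blast)

text \<open>A common supersequence of \<open>[0..<nx]\<close> and \<open>[0..<ny]\<close> of length \<open>N\<close> in which exactly the
  pairs in \<open>M\<close> are identified.\<close>

definition merging :: "nat \<Rightarrow> nat \<Rightarrow> (nat \<times> nat) set \<Rightarrow> nat \<Rightarrow> (nat \<Rightarrow> nat) \<Rightarrow> (nat \<Rightarrow> nat) \<Rightarrow> bool" where
  "merging nx ny M N p q \<longleftrightarrow>
     strict_mono_on {..<nx} p \<and> p ` {..<nx} \<subseteq> {..<N} \<and>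
     strict_mono_on {..<ny} q \<and> q ` {..<ny} \<subseteq> {..<N} \<and>
     (\<forall>r<nx. \<forall>s<ny. p r = q s \<longleftrightarrow> (r, s) \<in> M)"

lemma merging_swap: "merging nx ny M N p q \<Longrightarrow> merging ny nx (prod.swap ` M) N q p"
  unfolding merging_def by (metis pair_in_swap_image)

lemma strict_mono_on_lessThan_extend:
  assumes "strict_mono_on {..<n} p" "p ` {..<n} \<subseteq> {..<N}"
  shows "strict_mono_on {..<Suc n} (p(n := N))"
  using assms by (auto simp: strict_mono_on_def less_Suc_eq)

lemma merging_extend_left:
  assumes "merging x ny M N p q" "\<forall>s. (x, s) \<notin> M"
  shows "merging (Suc x) ny M (Suc N) (p(x := N)) q"
  using assms strict_mono_on_lessThan_extend[of x p N]
  by (auto simp: merging_def less_Suc_eq image_subset_iff)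

lemma merging_extend_right:
  assumes "merging nx y M N p q" "\<forall>r. (r, y) \<notin> M"
  shows "merging nx (Suc y) M (Suc N) p (q(y := N))"
proof -
  have "merging (Suc y) nx (prod.swap ` M) (Suc N) (q(y := N)) p"
    using assms by (intro merging_extend_left merging_swap) auto
  from merging_swap[OF this] show ?thesis
    by (simp add: image_image)
qed

lemma merging_extend_both:
  assumes "merging x y M N p q" "M \<subseteq> {..<x} \<times> {..<y}"
  shows "merging (Suc x) (Suc y) (insert (x, y) M) (Suc N) (p(x := N)) (q(y := N))"
  using assms strict_mono_on_lessThan_extend[of x p N] strict_mono_on_lessThan_extend[of y q N]
  by (auto simp: merging_def less_Suc_eq image_subset_iff)

lemma merging_exists:
  assumes "order_matching M" "M \<subseteq> {..<nx} \<times> {..<ny}"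
  shows "\<exists>p q. merging nx ny M (nx + ny - card M) p q"
  using assms
proof (induction "nx + ny" arbitrary: nx ny M rule: less_induct)
  case less
  show ?case
  proof (cases "nx = 0 \<or> ny = 0")
    case True
    with less.prems(2) have "M = {}" by auto
    with True show ?thesis
      by (intro exI[of _ id]) (auto simp: merging_def strict_mono_on_def)
  next
    case False
    then obtain x y where xy: "nx = Suc x" "ny = Suc y"
      by (metis not0_implies_Suc)
    have fin: "finite M"
      using less.prems(2) finite_subset by blast
    from less.prems[unfolded xy] show ?thesis
    proof (cases rule: order_matching_last_cases)
      case 1
      define M' where "M' = M - {(x, y)}"
      have "order_matching M'"
        using order_matching_subset[OF less.prems(1)] by (auto simp: M'_def)
      moreover have sub: "M' \<subseteq> {..<x} \<times> {..<y}"
        using order_matching_remove_last less.prems 1 xy by (simp add: M'_def)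
      ultimately obtain p q where pq: "merging x y M' (x + y - card M') p q"
        using less.hyps[of x y M'] xy by auto
      have "card M = Suc (card M')"
        unfolding M'_def by (metis card_Suc_Diff1 fin 1)
      moreover have "card M' \<le> x"
        using card_order_matching_le[OF \<open>order_matching M'\<close> sub] .
      ultimately have N: "Suc (x + y - card M') = nx + ny - card M"
        using xy by simp
      have "insert (x, y) M' = M"
        using 1 by (auto simp: M'_def)
      with merging_extend_both[OF pq sub] show ?thesis
        unfolding N xy[symmetric] by blast
    next
      case 2
      have sub: "M \<subseteq> {..<x} \<times> {..<ny}"
        using less.prems(2) 2 xy by (fastforce simp: less_Suc_eq)
      then obtain p q where pq: "merging x ny M (x + ny - card M) p q"
        using less.hyps[of x ny M] less.prems(1) xy by auto
      have "card M \<le> x"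
        by (rule card_order_matching_le[OF less.prems(1) sub])
      then have N: "Suc (x + ny - card M) = nx + ny - card M"
        using xy by simp
      from merging_extend_left[OF pq 2] show ?thesis
        unfolding N xy(1)[symmetric] by blast
    next
      case 3
      have sub: "M \<subseteq> {..<nx} \<times> {..<y}"
        using less.prems(2) 3 xy by (fastforce simp: less_Suc_eq)
      then obtain p q where pq: "merging nx y M (nx + y - card M) p q"
        using less.hyps[of nx y M] less.prems(1) xy by auto
      have "card M \<le> nx"
        by (rule card_order_matching_le[OF less.prems])
      then have N: "Suc (nx + y - card M) = nx + ny - card M"
        using xy by simp
      from merging_extend_right[OF pq 3] show ?thesis
        unfolding N xy(2)[symmetric] by blast
    qed
  qed
qed

lemma ins_balls_meet_if_mergings:
  assumes X: "is_array m k X" "0 < m" and Y: "is_array m k Y"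
    and rows: "merging m m MR (m + tr) pX pY" and cols: "merging k k MC (k + tc) qX qY"
    and agree: "\<And>r s c d. (r, s) \<in> MR \<Longrightarrow> (c, d) \<in> MC \<Longrightarrow> X ! r ! c = Y ! s ! d"
  shows "ins_ball tr tc X \<inter> ins_ball tr tc Y \<noteq> {}"
proof -
  \<comment> \<open>Entries outside both embedded copies are irrelevant; on their overlap the two
    disjuncts agree by \<open>agree\<close>.\<close>
  define F where "F a b \<longleftrightarrow>
      (\<exists>r<m. \<exists>c<k. pX r = a \<and> qX c = b \<and> X ! r ! c) \<or>
      (\<exists>s<m. \<exists>d<k. pY s = a \<and> qY d = b \<and> Y ! s ! d)" for a b
  define Z where "Z = grid [0..<m + tr] [0..<k + tc] F"
  have Z: "is_array (m + tr) (k + tc) Z"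
    unfolding Z_def using is_array_grid[of "[0..<m + tr]" "[0..<k + tc]" F] by simp
  have inj: "inj_on pX {..<m}" "inj_on pY {..<m}" "inj_on qX {..<k}" "inj_on qY {..<k}"
    using rows cols by (auto simp: merging_def strict_mono_on_imp_inj_on)
  have entry: "Z ! a ! b = F a b" if "a < m + tr" "b < k + tc" for a b
    using that by (simp add: Z_def grid_def)
  have "Z \<in> ins_ball tr tc X"
  proof (rule embedding_in_ins_ball[OF X Z])
    fix r c assume rc: "r < m" "c < k"
    have "Z ! pX r ! qX c = F (pX r) (qX c)"
      using rc rows cols by (intro entry) (auto simp: merging_def)
    also have "\<dots> \<longleftrightarrow> X ! r ! c"
      using rc rows cols agree inj by (auto simp: F_def merging_def inj_on_eq_iff) metis
    finally show "Z ! pX r ! qX c = X ! r ! c" .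
  qed (use rows cols in \<open>auto simp: merging_def\<close>)
  moreover have "Z \<in> ins_ball tr tc Y"
  proof (rule embedding_in_ins_ball[OF Y X(2) Z])
    fix s d assume sd: "s < m" "d < k"
    have "Z ! pY s ! qY d = F (pY s) (qY d)"
      using sd rows cols by (intro entry) (auto simp: merging_def)
    also have "\<dots> \<longleftrightarrow> Y ! s ! d"
      using sd rows cols agree inj by (auto simp: F_def merging_def inj_on_eq_iff)
    finally show "Z ! pY s ! qY d = Y ! s ! d" .
  qed (use rows cols in \<open>auto simp: merging_def\<close>)
  ultimately show ?thesis by blast
qed

lemma del_ballE:
  assumes "W \<in> del_ball tr tc X" "is_array m k X" "0 < m"
  obtains A B where "A \<subseteq> {..<m}" "card A + tr = m" "B \<subseteq> {..<k}" "card B + tc = k"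
    "W = grid (sorted_list_of_set A) (sorted_list_of_set B) (\<lambda>i j. X ! i ! j)"
proof -
  obtain R C where RC: "R \<subseteq> {..<m}" "card R = tr" "C \<subseteq> {..<k}" "card C = tc" "W = del_rc R C X"
    using assms ncols_array[OF assms(2,3)] by (auto simp: del_ball_def is_array_def)
  show ?thesis
  proof (rule that[of "{..<m} - R" "{..<k} - C"])
    show "W = grid (sorted_list_of_set ({..<m} - R)) (sorted_list_of_set ({..<k} - C)) (\<lambda>i j. X ! i ! j)"
      using RC(5) del_rc_array[OF assms(2)] by simp
  qed (use RC card_mono[OF finite_lessThan RC(1)] card_mono[OF finite_lessThan RC(3)]
       in \<open>auto simp: card_Diff_subset finite_subset\<close>)
qed

lemma del_balls_meet_imp_ins_balls_meet:
  assumes X: "is_array m k X" "0 < m" and Y: "is_array m k Y"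
    and W: "W \<in> del_ball tr tc X" "W \<in> del_ball tr tc Y"
  shows "ins_ball tr tc X \<inter> ins_ball tr tc Y \<noteq> {}"
proof -
  obtain AX BX where AX: "AX \<subseteq> {..<m}" "card AX + tr = m" and BX: "BX \<subseteq> {..<k}" "card BX + tc = k"
    and WX: "W = grid (sorted_list_of_set AX) (sorted_list_of_set BX) (\<lambda>i j. X ! i ! j)"
    using del_ballE[OF W(1) X] .
  obtain AY BY where AY: "AY \<subseteq> {..<m}" "card AY + tr = m" and BY: "BY \<subseteq> {..<k}" "card BY + tc = k"
    and WY: "W = grid (sorted_list_of_set AY) (sorted_list_of_set BY) (\<lambda>i j. Y ! i ! j)"
    using del_ballE[OF W(2) Y X(2)] .
  have fin: "finite AX" "finite AY" "finite BX" "finite BY"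
    using AX AY BX BY finite_subset by blast+
  define MR where "MR = set (zip (sorted_list_of_set AX) (sorted_list_of_set AY))"
  define MC where "MC = set (zip (sorted_list_of_set BX) (sorted_list_of_set BY))"
  have matching: "order_matching MR" "order_matching MC"
    unfolding MR_def MC_def using AX AY BX BY fin by (auto intro!: order_matching_zip)
  have card: "card MR = card AX" "card MC = card BX"
    unfolding MR_def MC_def using AX AY BX BY fin by (simp_all add: distinct_card distinct_zipI1)
  have "MR \<subseteq> AX \<times> AY" "MC \<subseteq> BX \<times> BY"
    unfolding MR_def MC_def using fin by (auto dest: set_zip_leftD set_zip_rightD)
  then have "MR \<subseteq> {..<m} \<times> {..<m}" "MC \<subseteq> {..<k} \<times> {..<k}"
    using AX AY BX BY by blast+
  moreover have "m + m - card MR = m + tr" "k + k - card MC = k + tc"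
    using AX(2) BX(2) card by simp_all
  ultimately obtain pX pY qX qY where "merging m m MR (m + tr) pX pY" "merging k k MC (k + tc) qX qY"
    using merging_exists[OF matching(1)] merging_exists[OF matching(2)] by metis
  moreover have "X ! r ! c = Y ! s ! d" if rs: "(r, s) \<in> MR" and cd: "(c, d) \<in> MC" for r s c d
  proof -
    obtain i j where "i < card AX" "r = sorted_list_of_set AX ! i" "s = sorted_list_of_set AY ! i"
      "j < card BX" "c = sorted_list_of_set BX ! j" "d = sorted_list_of_set BY ! j"
      using rs cd AX AY BX BY by (auto simp: MR_def MC_def set_zip)
    then show ?thesis
      using nth_grid_eq[OF WX[symmetric, THEN trans, OF WY]] by simp
  qed
  ultimately show ?thesis
    by (rule ins_balls_meet_if_mergings[OF X Y])
qed

lemma ins_ballE: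
  assumes "Z \<in> ins_ball tr tc X" "is_array m k X" "0 < m"
  obtains A B where "A \<subseteq> {..<m + tr}" "card A = m" "B \<subseteq> {..<k + tc}" "card B = k"
    "X = grid (sorted_list_of_set A) (sorted_list_of_set B) (\<lambda>i j. Z ! i ! j)"
proof -
  obtain R C where Z: "is_array (m + tr) (k + tc) Z"
    and RC: "R \<subseteq> {..<m + tr}" "card R = tr" "C \<subseteq> {..<k + tc}" "card C = tc" "X = del_rc R C Z"
    using assms ncols_array[OF assms(2,3)] by (auto simp: ins_ball_def is_array_def)
  show ?thesis
  proof (rule that[of "{..<m + tr} - R" "{..<k + tc} - C"])
    show "X = grid (sorted_list_of_set ({..<m + tr} - R)) (sorted_list_of_set ({..<k + tc} - C))
        (\<lambda>i j. Z ! i ! j)"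
      using RC(5) del_rc_array[OF Z] by simp
  qed (use RC in \<open>auto simp: card_Diff_subset finite_subset\<close>)
qed

lemma card_Int_ge:
  assumes "finite U" "A \<subseteq> U" "B \<subseteq> U"
  shows "card A + card B \<le> card U + card (A \<inter> B)"
proof -
  have "card A + card B = card (A \<union> B) + card (A \<inter> B)"
    using assms finite_subset by (intro card_Un_Int) auto
  moreover have "card (A \<union> B) \<le> card U"
    using assms by (intro card_mono) auto
  ultimately show ?thesis by linarith
qed

lemma ins_balls_meet_imp_del_balls_meet:
  assumes X: "is_array m k X" "0 < m" and Y: "is_array m k Y" and "tr \<le> m" "tc \<le> k"
    and Z: "Z \<in> ins_ball tr tc X" "Z \<in> ins_ball tr tc Y"
  shows "del_ball tr tc X \<inter> del_ball tr tc Y \<noteq> {}"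
proof -
  obtain AX BX where AX: "AX \<subseteq> {..<m + tr}" "card AX = m" and BX: "BX \<subseteq> {..<k + tc}" "card BX = k"
    and X_sub: "X = grid (sorted_list_of_set AX) (sorted_list_of_set BX) (\<lambda>i j. Z ! i ! j)"
    using ins_ballE[OF Z(1) X] .
  obtain AY BY where AY: "AY \<subseteq> {..<m + tr}" "card AY = m" and BY: "BY \<subseteq> {..<k + tc}" "card BY = k"
    and Y_sub: "Y = grid (sorted_list_of_set AY) (sorted_list_of_set BY) (\<lambda>i j. Z ! i ! j)"
    using ins_ballE[OF Z(2) Y X(2)] .
  have fin: "finite AX" "finite AY" "finite BX" "finite BY"
    using AX AY BX BY finite_subset by blast+
  have "m - tr \<le> card (AX \<inter> AY)" "k - tc \<le> card (BX \<inter> BY)"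
    using card_Int_ge[OF finite_lessThan AX(1) AY(1)] card_Int_ge[OF finite_lessThan BX(1) BY(1)]
      AX AY BX BY by simp_all
  then obtain K L where K: "K \<subseteq> AX \<inter> AY" "card K = m - tr" and L: "L \<subseteq> BX \<inter> BY" "card L = k - tc"
    by (meson obtain_subset_with_card_n)
  have "AX \<noteq> {}" "AY \<noteq> {}"
    using AX AY X(2) by auto
  then have "grid (sorted_list_of_set K) (sorted_list_of_set L) (\<lambda>i j. Z ! i ! j)
      \<in> del_ball tr tc X \<inter> del_ball tr tc Y"
    unfolding X_sub Y_sub using fin K L AX AY BX BY assms(4,5)
    by (intro IntI subgrid_in_del_ball) auto
  then show ?thesis by blast
qed

lemma del_balls_disjoint_iff_ins_balls_disjoint:
  assumes "is_array m k X" "is_array m k Y" "0 < m" "tr \<le> m" "tc \<le> k"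
  shows "del_ball tr tc X \<inter> del_ball tr tc Y = {} \<longleftrightarrow> ins_ball tr tc X \<inter> ins_ball tr tc Y = {}"
  using del_balls_meet_imp_ins_balls_meet[OF assms(1,3,2)]
    ins_balls_meet_imp_del_balls_meet[OF assms(1,3,2,4,5)] by blast

lemma del_code_iff_ins_code:
  assumes "Cd \<subseteq> {X. is_array m k X}" "0 < m" "tr \<le> m" "tc \<le> k"
  shows "del_code tr tc Cd \<longleftrightarrow> ins_code tr tc Cd"
proof -
  have "del_ball tr tc X \<inter> del_ball tr tc Y = {} \<longleftrightarrow> ins_ball tr tc X \<inter> ins_ball tr tc Y = {}"
    if "X \<in> Cd" "Y \<in> Cd" for X Y
    using that assms by (intro del_balls_disjoint_iff_ins_balls_disjoint) auto
  then show ?thesis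
    unfolding del_code_def ins_code_def by blast
qed

theorem corollary1:
  fixes n t :: nat and Cd :: "bool list list set"
  assumes "n \<ge> 2" and "1 \<le> t" and "t \<le> n - 1"
    and "Cd \<subseteq> {X. is_array n n X}"
  shows "del_code t t Cd \<longleftrightarrow> ins_code t t Cd"
  using del_code_iff_ins_code[OF assms(4)] assms(1,3) by simp

end
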